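(* For every integer $k \geq 1$, let $\mathcal{c}(k)$ denote the greatest common divisor of all the sums $\sum_{i=1}^{k} c_{n+i}$, $n \geq 0$. Then $$\mathcal{c}(k) = \begin{cases} 4P_{k}, & \text{if } k \text{ is even};\\ Q_{k}, & \text{if } k \text{ is odd}.\end{cases}$$
   Context: The Pell sequence $(P_n)_{n\ge0}$ is defined by $P_0=0$, $P_1=1$, $P_n = 2P_{n-1}+P_{n-2}$. The associated Pell sequence $(Q_n)_{n\ge0}$ is defined by $Q_0=1$, $Q_1=1$, $Q_n=2Q_{n-1}+Q_{n-2}$. The Lucas-cobalancing sequence $(c_n)_{n\ge0}$ is defined by $c_0=-1$, $c_1=1$, $c_n=6c_{n-1}-c_{n-2}$. *)

theory Defs
  imports Main
begin

fun pell :: "nat \<Rightarrow> int" where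
  "pell 0 = 0"
| "pell (Suc 0) = 1"
| "pell (Suc (Suc n)) = 2 * pell (Suc n) + pell n"

fun assoc_pell :: "nat \<Rightarrow> int" where
  "assoc_pell 0 = 1"
| "assoc_pell (Suc 0) = 1"
| "assoc_pell (Suc (Suc n)) = 2 * assoc_pell (Suc n) + assoc_pell n"

fun lucas_cobal :: "nat \<Rightarrow> int" where
  "lucas_cobal 0 = -1"
| "lucas_cobal (Suc 0) = 1"
| "lucas_cobal (Suc (Suc n)) = 6 * lucas_cobal (Suc n) - lucas_cobal n"

definition cgcd :: "nat \<Rightarrow> int" where
  "cgcd k = Gcd {(\<Sum>i=1..k. lucas_cobal (n + i)) | n. True}"

end

theory Submission
  imports Defs
begin

text \<open>
  Since c(n+1) = Q(2n+1) and Q(m+2) - Q(m) = 2 Q(m+1), the sums telescope: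
  2 (c(n+1) + ... + c(n+k)) = Q(2n+2k) - Q(2n). The addition formulas together with
  Q(k)^2 - 2 P(k)^2 = (-1)^k factor this difference, so the sum equals 2 P(k) P(2n+k)
  for even k and Q(k) Q(2n+k) for odd k. Hence the claimed value divides every sum
  (for even k, P(2n+k) is even), and it is already the gcd of the sums for n = 0 and
  n = 1, because gcd P(k) P(k+2) = gcd P(k) 2 and gcd Q(k) Q(k+2) = gcd Q(k) 2.
\<close>

lemma Gcd_eq_gcd_of_members:
  fixes A :: "'a::semiring_Gcd set"
  assumes "x \<in> A" "y \<in> A" "gcd x y = d" "\<And>a. a \<in> A \<Longrightarrow> d dvd a"
  shows "Gcd A = d"
  using assms by (intro Gcd_eqI) auto

lemma gcd_consecutive_recurrence:
  fixes f :: "nat \<Rightarrow> 'a::semiring_gcd"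
  assumes rec: "\<And>n. f (Suc (Suc n)) = c * f (Suc n) + f n"
  shows "gcd (f n) (f (Suc n)) = gcd (f 0) (f 1)"
proof (induction n)
  case (Suc n)
  have "gcd (f (Suc n)) (f (Suc (Suc n))) = gcd (f (Suc n)) (f n)"
    by (simp add: rec gcd_add_mult)
  with Suc show ?case by (simp add: gcd.commute)
qed simp

lemma gcd_recurrence_skip:
  fixes f :: "nat \<Rightarrow> 'a::semiring_gcd"
  assumes rec: "\<And>n. f (Suc (Suc n)) = c * f (Suc n) + f n"
    and "coprime (f n) (f (Suc n))"
  shows "gcd (f n) (f (n + 2)) = gcd (f n) c"
proof -
  have "gcd (f n) (f (n + 2)) = gcd (f n) (c * f (Suc n))"
    by (simp add: rec numeral_eq_Suc add.commute)
  also have "\<dots> = gcd (f n) c"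
    using assms(2) by (simp add: gcd_mult_right_right_cancel)
  finally show ?thesis .
qed

lemma pell_nonneg: "pell n \<ge> 0"
proof -
  have "pell n \<ge> 0 \<and> pell (Suc n) \<ge> 0" by (induction n) auto
  then show ?thesis by simp
qed

lemma assoc_pell_nonneg: "assoc_pell n \<ge> 0"
proof -
  have "assoc_pell n \<ge> 0 \<and> assoc_pell (Suc n) \<ge> 0" by (induction n) auto
  then show ?thesis by simp
qed

lemma even_pell_iff: "even (pell n) \<longleftrightarrow> even n"
proof -
  have "(even (pell n) \<longleftrightarrow> even n) \<and> (even (pell (Suc n)) \<longleftrightarrow> even (Suc n))"
    by (induction n) auto
  then show ?thesis by simp
qed

lemma odd_assoc_pell: "odd (assoc_pell n)"
proof -
  have "odd (assoc_pell n) \<and> odd (assoc_pell (Suc n))" by (induction n) auto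
  then show ?thesis by simp
qed

lemma coprime_pell_Suc: "coprime (pell n) (pell (Suc n))"
  using gcd_consecutive_recurrence[of pell 2 n] by (simp add: coprime_iff_gcd_eq_1)

lemma coprime_assoc_pell_Suc: "coprime (assoc_pell n) (assoc_pell (Suc n))"
  using gcd_consecutive_recurrence[of assoc_pell 2 n] by (simp add: coprime_iff_gcd_eq_1)

lemma gcd_pell_add_2: "even k \<Longrightarrow> gcd (pell k) (pell (k + 2)) = 2"
  using gcd_recurrence_skip[of pell 2 k] coprime_pell_Suc[of k] even_pell_iff[of k] by simp

lemma gcd_assoc_pell_add_2: "gcd (assoc_pell k) (assoc_pell (k + 2)) = 1"
  using gcd_recurrence_skip[of assoc_pell 2 k] coprime_assoc_pell_Suc[of k] odd_assoc_pell[of k]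
  by simp

lemma pell_assoc_pell_Suc:
  "pell (Suc n) = pell n + assoc_pell n \<and> assoc_pell (Suc n) = assoc_pell n + 2 * pell n"
  by (induction n rule: pell.induct) auto

lemma pell_assoc_pell_add:
  "pell (a + b) = pell a * assoc_pell b + assoc_pell a * pell b \<and>
   assoc_pell (a + b) = assoc_pell a * assoc_pell b + 2 * pell a * pell b"
proof (induction b)
  case (Suc b)
  then show ?case
    using pell_assoc_pell_Suc[of "a + b"] pell_assoc_pell_Suc[of b]
    by (simp add: algebra_simps)
qed simp

lemma assoc_pell_sq_minus_pell_sq: "assoc_pell n ^ 2 - 2 * pell n ^ 2 = (-1) ^ n"
proof (induction n)
  case (Suc n)
  have "assoc_pell (Suc n) ^ 2 - 2 * pell (Suc n) ^ 2 = - (assoc_pell n ^ 2 - 2 * pell n ^ 2)"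
    using pell_assoc_pell_Suc[of n] by (simp add: power2_eq_square algebra_simps)
  with Suc show ?case by simp
qed simp

lemma assoc_pell_sub:
  "(-1) ^ k * assoc_pell a = assoc_pell (a + k) * assoc_pell k - 2 * pell (a + k) * pell k"
proof -
  have "assoc_pell (a + k) * assoc_pell k - 2 * pell (a + k) * pell k
      = assoc_pell a * (assoc_pell k ^ 2 - 2 * pell k ^ 2)"
    using pell_assoc_pell_add[of a k] by (simp add: power2_eq_square algebra_simps)
  then show ?thesis by (simp add: assoc_pell_sq_minus_pell_sq)
qed

lemma assoc_pell_add_twice_diff:
  "assoc_pell (a + 2 * k) - assoc_pell a =
     (if even k then 4 * pell k * pell (a + k) else 2 * assoc_pell k * assoc_pell (a + k))"
proof -
  have "assoc_pell (a + 2 * k) = assoc_pell ((a + k) + k)"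
    by (simp add: mult_2 add.assoc)
  also have "\<dots> = assoc_pell (a + k) * assoc_pell k + 2 * pell (a + k) * pell k"
    using pell_assoc_pell_add by blast
  finally show ?thesis
    using assoc_pell_sub[of k a] by (cases "even k") (simp_all add: algebra_simps)
qed

lemma lucas_cobal_Suc_eq_assoc_pell: "lucas_cobal (Suc n) = assoc_pell (2 * n + 1)"
proof -
  have "lucas_cobal (Suc n) = assoc_pell (2 * n + 1) \<and>
        lucas_cobal (Suc (Suc n)) = assoc_pell (2 * n + 3)"
    by (induction n) (simp_all add: numeral_eq_Suc)
  then show ?thesis by simp
qed

definition cobal_window :: "nat \<Rightarrow> nat \<Rightarrow> int" where
  "cobal_window n k = (\<Sum>i=1..k. lucas_cobal (n + i))"

lemma cobal_window_telescope:
  "2 * cobal_window n k = assoc_pell (2 * n + 2 * k) - assoc_pell (2 * n)"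
proof (induction k)
  case (Suc k)
  have "cobal_window n (Suc k) = cobal_window n k + assoc_pell (2 * n + 2 * k + 1)"
    using lucas_cobal_Suc_eq_assoc_pell[of "n + k"] by (simp add: cobal_window_def algebra_simps)
  moreover have "assoc_pell (2 * n + 2 * Suc k) =
      2 * assoc_pell (2 * n + 2 * k + 1) + assoc_pell (2 * n + 2 * k)"
    by (simp add: numeral_eq_Suc)
  ultimately show ?case using Suc by simp
qed (simp add: cobal_window_def)

lemma cobal_window_eq:
  "cobal_window n k =
     (if even k then 2 * pell k * pell (2 * n + k) else assoc_pell k * assoc_pell (2 * n + k))"
  using cobal_window_telescope[of n k] assoc_pell_add_twice_diff[of "2 * n" k] by auto

lemma dvd_cobal_window:
  "(if even k then 4 * pell k else assoc_pell k) dvd cobal_window n k"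
  using even_pell_iff[of "2 * n + k"] by (auto simp: cobal_window_eq)

lemma gcd_cobal_window_0_1:
  "gcd (cobal_window 0 k) (cobal_window 1 k) = (if even k then 4 * pell k else assoc_pell k)"
proof (cases "even k")
  case True
  then have "gcd (cobal_window 0 k) (cobal_window 1 k)
      = \<bar>2 * pell k\<bar> * gcd (pell k) (pell (k + 2))"
    by (simp add: cobal_window_eq add.commute gcd_mult_left abs_mult)
  with True show ?thesis by (simp only: gcd_pell_add_2) (simp add: pell_nonneg)
next
  case False
  then have "gcd (cobal_window 0 k) (cobal_window 1 k)
      = \<bar>assoc_pell k\<bar> * gcd (assoc_pell k) (assoc_pell (k + 2))"
    by (simp add: cobal_window_eq add.commute gcd_mult_left abs_mult)
  with False show ?thesis by (simp only: gcd_assoc_pell_add_2) (simp add: assoc_pell_nonneg)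
qed

theorem theorem19:
  fixes k :: nat
  assumes "k \<ge> 1"
  shows "cgcd k = (if even k then 4 * pell k else assoc_pell k)"
proof -
  have "cgcd k = Gcd (range (\<lambda>n. cobal_window n k))"
    by (simp add: cgcd_def cobal_window_def full_SetCompr_eq)
  also have "\<dots> = (if even k then 4 * pell k else assoc_pell k)"
  proof (rule Gcd_eq_gcd_of_members)
    show "cobal_window 0 k \<in> range (\<lambda>n. cobal_window n k)"
      and "cobal_window 1 k \<in> range (\<lambda>n. cobal_window n k)" by auto
    show "gcd (cobal_window 0 k) (cobal_window 1 k) = (if even k then 4 * pell k else assoc_pell k)"
      by (rule gcd_cobal_window_0_1)
  qed (auto simp only: dvd_cobal_window)
  finally show ?thesis .
qed

end
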